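(* Let $\Pi$ be a 2-dimensional real vector space with a fixed nonzero constant area form $\Omega\in\Lambda^2\Pi^*$, and let $\nabla$ be a torsion-free connection with skew-symmetric Ricci tensor on a nonempty connected open set $U\subset\Pi$ which is invariant under the infinitesimal action of $\mathrm{SL}(\Pi)$ (i.e. for every $A\in\mathfrak{sl}(\Pi)$, the vector field $y\mapsto Ay$ on $U$ is an infinitesimal affine transformation of $\nabla$). Then there exists $c\in\mathbb{R}$ such that $\nabla_u v=2c[\Omega(w,u)v+\Omega(w,v)u]-c^2\Omega(w,u)\Omega(w,v)w$ for all vector fields $u$ and all constant vector fields $v$ on $U$, where $w$ denotes the radial (identity) vector field on $\Pi$.
   Context: All objects are $C^\infty$. An infinitesimal affine transformation of a connection is a vector field whose local flows preserve the connection. *)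

theory Defs
  imports "HOL-Analysis.Analysis"
begin

fun Ck :: "nat \<Rightarrow> 'a::euclidean_space set \<Rightarrow> ('a \<Rightarrow> 'b::real_normed_vector) \<Rightarrow> bool" where
  "Ck 0 U f = continuous_on U f"
| "Ck (Suc k) U f = (\<exists>f'. (\<forall>p\<in>U. (f has_derivative f' p) (at p)) \<and> (\<forall>v. Ck k U (\<lambda>p. f' p v)))"

definition smooth_on :: "'a::euclidean_space set \<Rightarrow> ('a \<Rightarrow> 'b::real_normed_vector) \<Rightarrow> bool" where
  "smooth_on U f \<longleftrightarrow> (\<forall>k. Ck k U f)"

definition dd :: "('a::real_normed_vector \<Rightarrow> 'b::real_normed_vector) \<Rightarrow> 'a \<Rightarrow> 'a \<Rightarrow> 'b" where
  "dd f p x = frechet_derivative f (at p) x"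

text \<open>A connection on an open set U of the vector space, given by its
  Christoffel symbols Gamma: nabla_u v (p) = Dv(p)(u p) + Gamma p (u p) (v p).
  Gamma p is bilinear, and Gamma depends smoothly on p.\<close>
definition is_connection :: "'a::euclidean_space set \<Rightarrow> ('a \<Rightarrow> 'a \<Rightarrow> 'a \<Rightarrow> 'a) \<Rightarrow> bool" where
  "is_connection U \<Gamma> \<longleftrightarrow> (\<forall>p\<in>U. bilinear (\<Gamma> p)) \<and> (\<forall>x y. smooth_on U (\<lambda>p. \<Gamma> p x y))"

definition cov :: "('a::euclidean_space \<Rightarrow> 'a \<Rightarrow> 'a \<Rightarrow> 'a) \<Rightarrow> ('a \<Rightarrow> 'a) \<Rightarrow> ('a \<Rightarrow> 'a) \<Rightarrow> 'a \<Rightarrow> 'a" where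
  "cov \<Gamma> u v p = dd v p (u p) + \<Gamma> p (u p) (v p)"

definition torsion_free :: "'a::euclidean_space set \<Rightarrow> ('a \<Rightarrow> 'a \<Rightarrow> 'a \<Rightarrow> 'a) \<Rightarrow> bool" where
  "torsion_free U \<Gamma> \<longleftrightarrow> (\<forall>p\<in>U. \<forall>x y. \<Gamma> p x y = \<Gamma> p y x)"

text \<open>Curvature R(x,y)z = nabla_x nabla_y z - nabla_y nabla_x z - nabla_[x,y] z,
  evaluated on constant vector fields x y z (which span every tangent space).\<close>
definition curv :: "('a::euclidean_space \<Rightarrow> 'a \<Rightarrow> 'a \<Rightarrow> 'a) \<Rightarrow> 'a \<Rightarrow> 'a \<Rightarrow> 'a \<Rightarrow> 'a \<Rightarrow> 'a" where
  "curv \<Gamma> p x y z = dd (\<lambda>q. \<Gamma> q y z) p x - dd (\<lambda>q. \<Gamma> q x z) p y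
     + \<Gamma> p x (\<Gamma> p y z) - \<Gamma> p y (\<Gamma> p x z)"

definition ricci :: "('a::euclidean_space \<Rightarrow> 'a \<Rightarrow> 'a \<Rightarrow> 'a) \<Rightarrow> 'a \<Rightarrow> 'a \<Rightarrow> 'a \<Rightarrow> real" where
  "ricci \<Gamma> p y z = (\<Sum>b\<in>Basis. curv \<Gamma> p b y z \<bullet> b)"

definition lin_trace :: "('a::euclidean_space \<Rightarrow> 'a) \<Rightarrow> real" where
  "lin_trace A = (\<Sum>b\<in>Basis. A b \<bullet> b)"

definition lin_flow :: "('a::euclidean_space \<Rightarrow> 'a) \<Rightarrow> real \<Rightarrow> 'a \<Rightarrow> 'a" where
  "lin_flow A t y = (\<Sum>n. (t ^ n / fact n) *\<^sub>R (A ^^ n) y)"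

text \<open>For the linear map phi_t = exp(tA),
  preserving nabla means Gamma(phi_t q)(phi_t x, phi_t y) = phi_t (Gamma q x y).\<close>
definition lin_inf_affine :: "'a::euclidean_space set \<Rightarrow> ('a \<Rightarrow> 'a \<Rightarrow> 'a \<Rightarrow> 'a) \<Rightarrow> ('a \<Rightarrow> 'a) \<Rightarrow> bool" where
  "lin_inf_affine U \<Gamma> A \<longleftrightarrow>
     (\<forall>p\<in>U. \<exists>V e. open V \<and> p \<in> V \<and> V \<subseteq> U \<and> e > 0 \<and>
        (\<forall>t q. \<bar>t\<bar> < e \<and> q \<in> V \<longrightarrow>
           lin_flow A t q \<in> U \<and>
           (\<forall>x y. \<Gamma> (lin_flow A t q) (lin_flow A t x) (lin_flow A t y)
                  = lin_flow A t (\<Gamma> q x y))))"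

end

(*
  The stabiliser of a point p ~= 0 in SL(Pi) contains the shears x |-> x + t Omega(p,x) p.
  Invariance of the torsion-free Gamma_p under them forces
    Gamma_p(x,y) = a (Omega(p,x) y + Omega(p,y) x) + b Omega(p,x) Omega(p,y) p,
  and invariance under all shears forces Gamma_0 = 0.  Shears in other directions carry these
  normal forms into each other, so (a,b) is locally constant on U - {0}, which is connected
  because dim Pi = 2.  For the model connection Ric(w,w) = 4b + a^2 whenever Omega(p,w) = 1;
  skew-symmetry of Ric makes this vanish, so a = 2c and b = -c^2.
*)

theory Submission
  imports Defs
begin

lemma affine_eq_near_zero:
  fixes K Y Z :: "'a::real_vector"
  assumes "e > 0" and eq: "\<And>t. \<bar>t\<bar> < e \<Longrightarrow> t \<noteq> 0 \<Longrightarrow> K + t *\<^sub>R Y = Z"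
  shows "Y = 0" and "K = Z"
proof -
  have "K + (e/2) *\<^sub>R Y = Z" "K + (e/4) *\<^sub>R Y = Z"
    using \<open>e > 0\<close> by (auto intro!: eq)
  then have "(e/2 - e/4) *\<^sub>R Y = 0"
    by (metis add_left_cancel scaleR_left_diff_distrib right_minus_eq)
  then show "Y = 0" using \<open>e > 0\<close> by simp
  with \<open>K + (e/2) *\<^sub>R Y = Z\<close> show "K = Z" by simp
qed

locale area_form =
  fixes \<Omega> :: "'a::euclidean_space \<Rightarrow> 'a \<Rightarrow> real"
  assumes dim: "DIM('a) = 2"
    and bilinear_form: "bilinear \<Omega>"
    and alternating [simp]: "\<And>x. \<Omega> x x = 0"
    and nonzero: "\<exists>x y. \<Omega> x y \<noteq> 0"
begin

lemmas bilinear_simps [simp] =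
  bilinear_ladd[OF bilinear_form] bilinear_radd[OF bilinear_form]
  bilinear_lmul[OF bilinear_form] bilinear_rmul[OF bilinear_form]
  bilinear_lsub[OF bilinear_form] bilinear_rsub[OF bilinear_form]
  bilinear_lneg[OF bilinear_form] bilinear_rneg[OF bilinear_form]
  bilinear_lzero[OF bilinear_form] bilinear_rzero[OF bilinear_form]

lemma skew: "\<Omega> y x = - \<Omega> x y"
proof -
  have "\<Omega> x y + \<Omega> y x = 0"
    using alternating[of "x + y"] alternating[of x] alternating[of y]
    by (simp del: alternating)
  then show ?thesis by linarith
qed

lemma decompose:
  assumes pw: "\<Omega> p w = 1"
  shows "x = \<Omega> x w *\<^sub>R p + \<Omega> p x *\<^sub>R w"
proof -
  have "p \<notin> span {w}"
    using pw by (auto simp: span_singleton)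
  moreover have "w \<noteq> 0" "p \<noteq> w"
    using pw by auto
  ultimately have "independent {p, w}" "card {p, w} = DIM('a)"
    by (simp_all add: independent_insert dim)
  then have "x \<in> span {p, w}"
    using card_eq_dim[of "{p, w}" UNIV] by auto
  then obtain k m where x: "x = k *\<^sub>R p + m *\<^sub>R w"
    by (auto simp: span_breakdown_eq span_singleton algebra_simps)
  then show ?thesis
    using pw by (simp add: skew[of w p])
qed

lemma exists_dual:
  assumes "p \<noteq> 0" shows "\<exists>w. \<Omega> p w = 1"
proof -
  obtain x y where "\<Omega> x y \<noteq> 0" using nonzero by auto
  then have xy: "\<Omega> x ((1 / \<Omega> x y) *\<^sub>R y) = 1" by simp
  have "\<Omega> p x \<noteq> 0 \<or> \<Omega> p y \<noteq> 0"
    using decompose[OF xy, of p] assms skew[of x p] by auto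
  then obtain z where "\<Omega> p z \<noteq> 0" by blast
  then show ?thesis
    by (intro exI[of _ "(1 / \<Omega> p z) *\<^sub>R z"]) simp
qed

definition shear :: "'a \<Rightarrow> real \<Rightarrow> 'a \<Rightarrow> 'a" where
  "shear v t x = x + (t * \<Omega> v x) *\<^sub>R v"

lemma linear_shear_generator: "linear (\<lambda>x. \<Omega> v x *\<^sub>R v)"
  by (rule linearI) (simp_all add: algebra_simps)

lemma lin_trace_shear_generator: "lin_trace (\<lambda>x. \<Omega> v x *\<^sub>R v) = 0"
proof -
  have "linear (\<Omega> v)"
    using bilinear_form by (simp add: bilinear_def)
  then show ?thesis
    unfolding lin_trace_def using Linear_Algebra.linear_componentwise[of "\<Omega> v" v 1]
    by (simp add: mult.commute)
qed

lemma lin_flow_shear: "lin_flow (\<lambda>x. \<Omega> v x *\<^sub>R v) t = shear v t"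
proof
  fix y
  define A where "A = (\<lambda>x. \<Omega> v x *\<^sub>R v)"
  have nilpotent: "A (A z) = 0" for z
    by (simp add: A_def)
  have "lin_flow A t y = (\<Sum>n\<in>{0, 1}. (t ^ n / fact n) *\<^sub>R (A ^^ n) y)"
    unfolding lin_flow_def
  proof (rule suminf_finite)
    fix n :: nat
    assume "n \<notin> {0, 1}"
    then obtain m where "n = Suc (Suc m)"
      by (metis One_nat_def insertCI not0_implies_Suc)
    then show "(t ^ n / fact n) *\<^sub>R (A ^^ n) y = 0"
      by (simp add: nilpotent)
  qed simp
  then show "lin_flow (\<lambda>x. \<Omega> v x *\<^sub>R v) t y = shear v t y"
    by (simp add: A_def shear_def)
qed

lemma area_shear [simp]: "\<Omega> (shear v t x) (shear v t y) = \<Omega> x y"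
  by (simp add: shear_def skew[of v x] algebra_simps)

lemma area_generator_shear [simp]: "\<Omega> v (shear v t x) = \<Omega> v x"
  by (simp add: shear_def)

lemma shear_shear_minus [simp]: "shear v t (shear v (- t) x) = x"
  by (simp add: shear_def algebra_simps)

lemma shear_fixed: "\<Omega> v p = 0 \<Longrightarrow> shear v t p = p"
  by (simp add: shear_def)

lemma shear_eq_0_iff [simp]: "shear v t x = 0 \<longleftrightarrow> x = 0"
proof
  assume "shear v t x = 0"
  then have "\<Omega> v x = 0"
    using area_generator_shear[of v t x] by simp
  with \<open>shear v t x = 0\<close> show "x = 0"
    by (simp add: shear_def)
qed (simp add: shear_def)

definition shear_invariant :: "'a \<Rightarrow> ('a \<Rightarrow> 'a \<Rightarrow> 'a) \<Rightarrow> bool" where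
  "shear_invariant v G \<longleftrightarrow>
     (\<exists>e>0. \<forall>t x y. \<bar>t\<bar> < e \<longrightarrow> G (shear v t x) (shear v t y) = shear v t (G x y))"

lemma shear_invariant_expansion:
  assumes G: "bilinear G" and "shear_invariant v G"
  shows shear_invariant_quadratic: "(\<Omega> v x * \<Omega> v y) *\<^sub>R G v v = 0"
    and shear_invariant_linear: "\<Omega> v y *\<^sub>R G x v + \<Omega> v x *\<^sub>R G v y = \<Omega> v (G x y) *\<^sub>R v"
proof -
  obtain e where "e > 0"
    and inv: "\<And>t. \<bar>t\<bar> < e \<Longrightarrow> G (shear v t x) (shear v t y) = shear v t (G x y)"
    using assms(2) unfolding shear_invariant_def by blast
  have "\<Omega> v y *\<^sub>R G x v + \<Omega> v x *\<^sub>R G v y + t *\<^sub>R ((\<Omega> v x * \<Omega> v y) *\<^sub>R G v v)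
      = \<Omega> v (G x y) *\<^sub>R v" if "\<bar>t\<bar> < e" "t \<noteq> 0" for t
  proof -
    have "G (shear v t x) (shear v t y) = G x y + t *\<^sub>R (\<Omega> v y *\<^sub>R G x v + \<Omega> v x *\<^sub>R G v y
        + t *\<^sub>R ((\<Omega> v x * \<Omega> v y) *\<^sub>R G v v))" (is "_ = _ + t *\<^sub>R ?K")
      by (simp add: shear_def bilinear_ladd[OF G] bilinear_radd[OF G]
          bilinear_lmul[OF G] bilinear_rmul[OF G] algebra_simps)
    then have "t *\<^sub>R ?K = t *\<^sub>R (\<Omega> v (G x y) *\<^sub>R v)"
      using inv[OF that(1)] by (simp add: shear_def)
    then show ?thesis
      by (rule scaleR_left_imp_eq[OF that(2)])
  qed
  from affine_eq_near_zero[OF \<open>e > 0\<close> this]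
  show "(\<Omega> v x * \<Omega> v y) *\<^sub>R G v v = 0"
    and "\<Omega> v y *\<^sub>R G x v + \<Omega> v x *\<^sub>R G v y = \<Omega> v (G x y) *\<^sub>R v"
    by simp_all
qed

lemma shear_invariant_self:
  assumes G: "bilinear G" and inv: "shear_invariant v G"
  shows "G v v = 0"
proof (cases "v = 0")
  case True
  then show ?thesis using G by (simp add: bilinear_lzero)
next
  case False
  then obtain w where "\<Omega> v w = 1" using exists_dual by blast
  then show ?thesis using shear_invariant_quadratic[OF G inv, of w w] by simp
qed

lemma shear_invariant_all_imp_zero:
  assumes G: "bilinear G" and sym: "\<And>x y. G x y = G y x" and inv: "\<And>v. shear_invariant v G"
  shows "G x y = 0"
proof -
  have "G (x + y) (x + y) = G x x + G x y + (G y x + G y y)"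
    by (simp add: bilinear_ladd[OF G] bilinear_radd[OF G])
  then have "2 *\<^sub>R G x y = 0"
    using shear_invariant_self[OF G inv] sym[of y x] by (simp add: scaleR_2)
  then show ?thesis by simp
qed

lemma bilinear_eq_on_dual_basis:
  assumes G: "bilinear G" and H: "bilinear H" and pw: "\<Omega> p w = 1"
    and "G p p = H p p" "G p w = H p w" "G w p = H w p" "G w w = H w w"
  shows "G x y = H x y"
proof -
  have "G (\<Omega> x w *\<^sub>R p + \<Omega> p x *\<^sub>R w) (\<Omega> y w *\<^sub>R p + \<Omega> p y *\<^sub>R w)
      = H (\<Omega> x w *\<^sub>R p + \<Omega> p x *\<^sub>R w) (\<Omega> y w *\<^sub>R p + \<Omega> p y *\<^sub>R w)"
    by (simp add: bilinear_ladd[OF G] bilinear_radd[OF G] bilinear_lmul[OF G] bilinear_rmul[OF G]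
        bilinear_ladd[OF H] bilinear_radd[OF H] bilinear_lmul[OF H] bilinear_rmul[OF H] assms(4-))
  then show ?thesis
    using decompose[OF pw, of x, symmetric] decompose[OF pw, of y, symmetric] by simp
qed

text \<open>The Christoffel symbols of the theorem are the case \<open>a = 2 * c\<close>, \<open>b = - c\<^sup>2\<close>.\<close>

definition invariant_christoffel :: "real \<Rightarrow> real \<Rightarrow> 'a \<Rightarrow> 'a \<Rightarrow> 'a \<Rightarrow> 'a" where
  "invariant_christoffel a b p x y =
     a *\<^sub>R (\<Omega> p x *\<^sub>R y + \<Omega> p y *\<^sub>R x) + (b * \<Omega> p x * \<Omega> p y) *\<^sub>R p"

lemma bilinear_invariant_christoffel: "bilinear (invariant_christoffel a b p)"
  unfolding bilinear_def by (auto intro!: linearI simp: invariant_christoffel_def algebra_simps)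

lemma invariant_christoffel_shear:
  "invariant_christoffel a b (shear v t q) (shear v t x) (shear v t y)
     = shear v t (invariant_christoffel a b q x y)"
  unfolding invariant_christoffel_def area_shear by (simp add: shear_def algebra_simps)

lemma shear_invariant_imp_invariant_christoffel:
  assumes G: "bilinear G" and sym: "\<And>x y. G x y = G y x"
    and "p \<noteq> 0" and inv: "shear_invariant p G"
  obtains a b where "G = invariant_christoffel a b p"
proof -
  obtain w where pw: "\<Omega> p w = 1"
    using exists_dual[OF \<open>p \<noteq> 0\<close>] by blast
  define a where "a = \<Omega> p (G w w) / 2"
  define b where "b = \<Omega> (G w w) w"
  have "2 *\<^sub>R G p w = 2 *\<^sub>R (a *\<^sub>R p)"
    using shear_invariant_linear[OF G inv, of w w] pw sym[of w p] by (simp add: a_def scaleR_2)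
  then have Gpw: "G p w = a *\<^sub>R p"
    by (rule scaleR_left_imp_eq[rotated]) simp
  have "G w w = b *\<^sub>R p + (2 * a) *\<^sub>R w"
    using decompose[OF pw, of "G w w"] by (simp add: a_def b_def)
  also have "(2 * a) *\<^sub>R w = a *\<^sub>R (w + w)"
    by (metis scaleR_2 scaleR_scaleR mult.commute)
  finally have Gww: "G w w = b *\<^sub>R p + a *\<^sub>R (w + w)" .
  have "G x y = invariant_christoffel a b p x y" for x y
  proof (rule bilinear_eq_on_dual_basis[OF G bilinear_invariant_christoffel pw])
    show "G p p = invariant_christoffel a b p p p"
      using shear_invariant_self[OF G inv] by (simp add: invariant_christoffel_def)
    show "G p w = invariant_christoffel a b p p w" "G w p = invariant_christoffel a b p w p"
      using Gpw sym[of w p] pw by (simp_all add: invariant_christoffel_def)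
    show "G w w = invariant_christoffel a b p w w"
      using Gww pw by (simp add: invariant_christoffel_def)
  qed
  then show thesis
    by (intro that ext)
qed

lemma invariant_christoffel_unique:
  assumes "p \<noteq> 0"
    and eq: "\<And>x y. invariant_christoffel a b p x y = invariant_christoffel a' b' p x y"
  shows "(a, b) = (a', b')"
proof -
  obtain w where pw: "\<Omega> p w = 1"
    using exists_dual[OF \<open>p \<noteq> 0\<close>] by blast
  have "invariant_christoffel c d p w w = (2 * c) *\<^sub>R w + d *\<^sub>R p" for c d
    by (simp add: invariant_christoffel_def pw algebra_simps flip: scaleR_2)
  then have "(2 * a) *\<^sub>R w + b *\<^sub>R p = (2 * a') *\<^sub>R w + b' *\<^sub>R p"
    using eq[of w w] by simp
  from arg_cong[where f="\<Omega> p", OF this] arg_cong[where f="\<lambda>z. \<Omega> z w", OF this]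
  show ?thesis
    using pw by simp
qed

text \<open>Two shears move \<open>p\<close> to any \<open>q\<close> near \<open>p\<close>: this stands in for the transitivity of
  \<open>SL(\<Pi>)\<close> on \<open>\<Pi> - {0}\<close>, which is only available through local flows.\<close>

lemma shear_shear_eq:
  assumes pw: "\<Omega> p w = 1" and "\<Omega> q w \<noteq> 0"
  shows "shear w ((\<Omega> q w - 1 - \<Omega> p q) / \<Omega> q w) (shear (p + w) (1 - \<Omega> q w) p) = q"
    (is "shear w ?s ?P = q")
proof -
  have wp: "\<Omega> w p = - 1"
    using pw skew[of w p] by simp
  have P: "?P = \<Omega> q w *\<^sub>R p + (\<Omega> q w - 1) *\<^sub>R w"
    using wp by (simp add: shear_def algebra_simps)
  have "shear w ?s ?P = ?P - (?s * \<Omega> q w) *\<^sub>R w"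
    unfolding shear_def P using wp by simp
  also have "?s * \<Omega> q w = \<Omega> q w - 1 - \<Omega> p q"
    using assms(2) by simp
  also have "?P - (\<Omega> q w - 1 - \<Omega> p q) *\<^sub>R w = \<Omega> q w *\<^sub>R p + \<Omega> p q *\<^sub>R w"
    unfolding P by (simp add: algebra_simps)
  finally show ?thesis
    using decompose[OF pw, of q] by simp
qed

lemma tendsto_area [tendsto_intros]:
  "(f \<longlongrightarrow> a) F \<Longrightarrow> (g \<longlongrightarrow> b) F \<Longrightarrow> ((\<lambda>x. \<Omega> (f x) (g x)) \<longlongrightarrow> \<Omega> a b) F"
  using bilinear_form bilinear_conv_bounded_bilinear bounded_bilinear.tendsto by blast

lemma lin_trace_dual_basis:
  assumes L: "linear L" and pw: "\<Omega> p w = 1"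
  shows "lin_trace L = \<Omega> (L p) w + \<Omega> p (L w)"
proof -
  have "L b \<bullet> b = \<Omega> b w * (L p \<bullet> b) + \<Omega> p b * (L w \<bullet> b)" for b
    using arg_cong[where f=L, OF decompose[OF pw, of b]] L
    by (simp add: linear_add linear_scale inner_add_left)
  moreover have "linear (\<lambda>x. \<Omega> x w)" "linear (\<Omega> p)"
    using bilinear_form by (simp_all add: bilinear_def)
  ultimately show ?thesis
    unfolding lin_trace_def
    using Linear_Algebra.linear_componentwise[of "\<lambda>x. \<Omega> x w" "L p" 1]
      Linear_Algebra.linear_componentwise[of "\<Omega> p" "L w" 1]
    by (simp add: sum.distrib mult.commute)
qed

lemma has_derivative_area_left [derivative_intros]:
  "(f has_derivative f') F \<Longrightarrow> ((\<lambda>x. \<Omega> (f x) y) has_derivative (\<lambda>h. \<Omega> (f' h) y)) F"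
  using bilinear_form bilinear_conv_bounded_bilinear bounded_bilinear.bounded_linear_left
    bounded_linear.has_derivative by blast

lemma invariant_christoffel_has_derivative:
  "((\<lambda>q. invariant_christoffel a b q y z) has_derivative
     (\<lambda>x. a *\<^sub>R (\<Omega> x y *\<^sub>R z + \<Omega> x z *\<^sub>R y)
        + (b * (\<Omega> x y * \<Omega> p z + \<Omega> p y * \<Omega> x z)) *\<^sub>R p + (b * \<Omega> p y * \<Omega> p z) *\<^sub>R x)) (at p)"
  unfolding invariant_christoffel_def
  by (auto intro!: derivative_eq_intros simp: fun_eq_iff algebra_simps)

lemma dd_invariant_christoffel:
  "dd (\<lambda>q. invariant_christoffel a b q y z) p x =
     a *\<^sub>R (\<Omega> x y *\<^sub>R z + \<Omega> x z *\<^sub>R y)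
     + (b * (\<Omega> x y * \<Omega> p z + \<Omega> p y * \<Omega> x z)) *\<^sub>R p + (b * \<Omega> p y * \<Omega> p z) *\<^sub>R x"
  unfolding dd_def by (simp flip: frechet_derivative_at[OF invariant_christoffel_has_derivative])

lemma ricci_invariant_christoffel:
  assumes pw: "\<Omega> p w = 1"
  shows "ricci (invariant_christoffel a b) p w w = 4 * b + a\<^sup>2"
proof -
  let ?G = "invariant_christoffel a b"
  have wp: "\<Omega> w p = - 1"
    using pw skew[of w p] by simp
  have dd_left: "linear (\<lambda>x. dd (\<lambda>q. ?G q y z) p x)" for y z
    unfolding dd_invariant_christoffel by (rule linearI) (simp_all add: algebra_simps)
  have dd_right: "linear (\<lambda>y. dd (\<lambda>q. ?G q y z) p x)" for x z
    unfolding dd_invariant_christoffel by (rule linearI) (simp_all add: algebra_simps)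
  have G_left: "linear (\<lambda>x. ?G p x y)" and G_right: "linear (?G p x)" for x y
    using bilinear_invariant_christoffel by (simp_all add: bilinear_def)
  have "linear (\<lambda>x. curv ?G p x w w)"
    unfolding curv_def
    by (intro linear_compose_add linear_compose_sub dd_left dd_right G_left
        linear_compose[OF G_left G_right, unfolded o_def])
  then have "ricci ?G p w w = \<Omega> (curv ?G p p w w) w + \<Omega> p (curv ?G p w w w)"
    using lin_trace_dual_basis[OF _ pw] by (simp add: ricci_def lin_trace_def)
  also have "curv ?G p w w w = 0"
    by (simp add: curv_def)
  also have "\<Omega> (curv ?G p p w w) w = 4 * b + a\<^sup>2"
    unfolding curv_def dd_invariant_christoffel using pw wp
    by (simp add: invariant_christoffel_def power2_eq_square algebra_simps)
  finally show ?thesis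
    by simp
qed

end

lemma ricci_transform_within_open:
  assumes "open S" "p \<in> S" and eq: "\<And>q. q \<in> S \<Longrightarrow> \<Gamma> q = \<Gamma>' q"
    and "\<And>y z. (\<lambda>q. \<Gamma>' q y z) differentiable at p"
  shows "ricci \<Gamma> p = ricci \<Gamma>' p"
proof -
  have "frechet_derivative (\<lambda>q. \<Gamma>' q y z) (at p) = frechet_derivative (\<lambda>q. \<Gamma> q y z) (at p)" for y z
    using assms by (intro frechet_derivative_transform_within_open) auto
  then have "dd (\<lambda>q. \<Gamma> q y z) p = dd (\<lambda>q. \<Gamma>' q y z) p" for y z
    by (simp add: dd_def fun_eq_iff)
  then show ?thesis
    using eq[OF \<open>p \<in> S\<close>] by (simp add: fun_eq_iff ricci_def curv_def)
qed

locale sl_invariant_connection = area_form \<Omega> for \<Omega> :: "'a::euclidean_space \<Rightarrow> 'a \<Rightarrow> real" +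
  fixes U :: "'a set" and \<Gamma> :: "'a \<Rightarrow> 'a \<Rightarrow> 'a \<Rightarrow> 'a"
  assumes U_open: "open U" and U_connected: "connected U" and U_nonempty: "U \<noteq> {}"
    and connection: "is_connection U \<Gamma>"
    and torsion_free_\<Gamma>: "torsion_free U \<Gamma>"
    and ricci_skew: "\<And>p y z. p \<in> U \<Longrightarrow> ricci \<Gamma> p y z = - ricci \<Gamma> p z y"
    and sl_invariant: "\<And>A. linear A \<Longrightarrow> lin_trace A = 0 \<Longrightarrow> lin_inf_affine U \<Gamma> A"
begin

lemma bilinear_Christoffel: "p \<in> U \<Longrightarrow> bilinear (\<Gamma> p)"
  using connection by (simp add: is_connection_def)

lemma Christoffel_commute: "p \<in> U \<Longrightarrow> \<Gamma> p x y = \<Gamma> p y x"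
  using torsion_free_\<Gamma> by (simp add: torsion_free_def)

definition shear_preserves :: "'a \<Rightarrow> real \<Rightarrow> 'a \<Rightarrow> bool" where
  "shear_preserves v t q \<longleftrightarrow> shear v t q \<in> U \<and>
     (\<forall>x y. \<Gamma> (shear v t q) (shear v t x) (shear v t y) = shear v t (\<Gamma> q x y))"

lemma eventually_shear_preserves:
  assumes "p \<in> U"
  shows "\<forall>\<^sub>F (t, q) in nhds (0, p). shear_preserves v t q"
proof -
  have "lin_inf_affine U \<Gamma> (\<lambda>x. \<Omega> v x *\<^sub>R v)"
    by (rule sl_invariant[OF linear_shear_generator lin_trace_shear_generator])
  from this[unfolded lin_inf_affine_def lin_flow_shear, rule_format, OF assms]
  obtain V e where "open V" "p \<in> V" "e > 0"
    and "\<forall>t q. \<bar>t\<bar> < e \<and> q \<in> V \<longrightarrow> shear_preserves v t q"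
    unfolding shear_preserves_def by blast
  then show ?thesis
    unfolding eventually_nhds
    by (intro exI[of _ "ball 0 e \<times> V"]) (auto simp: open_Times)
qed

lemma shear_invariant_Christoffel:
  assumes "p \<in> U" "\<Omega> v p = 0"
  shows "shear_invariant v (\<Gamma> p)"
proof -
  have "((\<lambda>t. (t, p)) \<longlongrightarrow> (0, p)) (nhds 0)"
    by (intro tendsto_Pair filterlim_ident tendsto_const)
  from eventually_compose_filterlim[OF eventually_shear_preserves[OF assms(1)] this]
  obtain e where "e > 0" "\<And>t. \<bar>t\<bar> < e \<Longrightarrow> shear_preserves v t p"
    unfolding eventually_nhds_metric dist_real_def by auto
  then show ?thesis
    unfolding shear_invariant_def shear_preserves_def shear_fixed[OF assms(2)] by blast
qed

lemma Christoffel_eq_invariant_christoffel: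
  assumes "p \<in> U" "p \<noteq> 0"
  obtains a b where "\<Gamma> p = invariant_christoffel a b p"
  using shear_invariant_imp_invariant_christoffel[OF bilinear_Christoffel[OF assms(1)]
      Christoffel_commute[OF assms(1)] assms(2) shear_invariant_Christoffel[OF assms(1) alternating]] .

lemma Christoffel_origin:
  assumes "0 \<in> U"
  shows "\<Gamma> 0 x y = 0"
  using shear_invariant_all_imp_zero[OF bilinear_Christoffel[OF assms] Christoffel_commute[OF assms]
      shear_invariant_Christoffel[OF assms bilinear_rzero[OF bilinear_form]]] .

definition christoffel_coeffs :: "'a \<Rightarrow> real \<times> real" where
  "christoffel_coeffs p = (SOME (a, b). \<Gamma> p = invariant_christoffel a b p)"

lemma Christoffel_eq_coeffs:
  assumes "p \<in> U" "p \<noteq> 0" "christoffel_coeffs p = (a, b)"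
  shows "\<Gamma> p = invariant_christoffel a b p"
proof -
  obtain a' b' where "\<Gamma> p = invariant_christoffel a' b' p"
    using Christoffel_eq_invariant_christoffel[OF assms(1,2)] .
  then have "\<exists>ab. case ab of (a, b) \<Rightarrow> \<Gamma> p = invariant_christoffel a b p"
    by auto
  from someI_ex[OF this] show ?thesis
    using assms(3) unfolding christoffel_coeffs_def by simp
qed

lemma christoffel_coeffs_shear:
  assumes q: "q \<in> U" "q \<noteq> 0" and "shear_preserves v t q"
  shows "christoffel_coeffs (shear v t q) = christoffel_coeffs q"
proof -
  obtain a b a' b' where ab: "christoffel_coeffs q = (a, b)"
    and ab': "christoffel_coeffs (shear v t q) = (a', b')"
    by (meson surj_pair)
  have U': "shear v t q \<in> U"
    and preserves: "\<And>x y. \<Gamma> (shear v t q) (shear v t x) (shear v t y) = shear v t (\<Gamma> q x y)"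
    using assms(3) by (simp_all add: shear_preserves_def)
  have "invariant_christoffel a' b' (shear v t q) x y = invariant_christoffel a b (shear v t q) x y"
    for x y
  proof -
    have "invariant_christoffel a' b' (shear v t q) x y
        = \<Gamma> (shear v t q) (shear v t (shear v (- t) x)) (shear v t (shear v (- t) y))"
      using Christoffel_eq_coeffs[OF U' _ ab'] q(2) by simp
    also have "\<dots> = shear v t (invariant_christoffel a b q (shear v (- t) x) (shear v (- t) y))"
      by (simp only: preserves Christoffel_eq_coeffs[OF q ab])
    also have "\<dots> = invariant_christoffel a b (shear v t q) x y"
      by (simp only: invariant_christoffel_shear[symmetric] shear_shear_minus)
    finally show ?thesis .
  qed
  from invariant_christoffel_unique[OF _ this] show ?thesis
    using ab ab' q(2) by simp
qed

lemma christoffel_coeffs_locally_constant: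
  assumes p: "p \<in> U" "p \<noteq> 0"
  shows "\<forall>\<^sub>F q in at p within U - {0}. christoffel_coeffs p = christoffel_coeffs q"
proof -
  obtain w where pw: "\<Omega> p w = 1"
    using exists_dual p(2) by blast
  define r where "r q = 1 - \<Omega> q w" for q
  define s where "s q = (\<Omega> q w - 1 - \<Omega> p q) / \<Omega> q w" for q
  define P where "P q = shear (p + w) (r q) p" for q
  let ?F = "at p within U - {0}"
  have "((\<lambda>q. (r q, p)) \<longlongrightarrow> (0, p)) ?F" "((\<lambda>q. (s q, P q)) \<longlongrightarrow> (0, p)) ?F"
    and lim: "((\<lambda>q. \<Omega> q w) \<longlongrightarrow> 1) ?F"
    unfolding r_def s_def P_def shear_def using pw by (auto intro!: tendsto_eq_intros)
  from this(1,2)[THEN eventually_compose_filterlim[OF eventually_shear_preserves[OF p(1)]]]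
  have "\<forall>\<^sub>F q in ?F. shear_preserves (p + w) (r q) p"
    and "\<forall>\<^sub>F q in ?F. shear_preserves w (s q) (P q)"
    by simp_all
  moreover have "\<forall>\<^sub>F q in ?F. \<Omega> q w \<noteq> 0"
    using tendsto_imp_eventually_ne[OF lim, of 0] by simp
  moreover have "\<forall>\<^sub>F q in ?F. q \<in> U - {0}"
    by (simp add: eventually_at_filter)
  ultimately show ?thesis
  proof eventually_elim
    case (elim q)
    then have "P q \<in> U" "P q \<noteq> 0"
      using p by (simp_all add: P_def shear_preserves_def)
    then have "christoffel_coeffs (shear w (s q) (P q)) = christoffel_coeffs p"
      using christoffel_coeffs_shear elim(1,2) p unfolding P_def by simp
    moreover have "shear w (s q) (P q) = q"
      unfolding s_def P_def r_def using shear_shear_eq[OF pw elim(3)] .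
    ultimately show ?case by simp
  qed
qed

lemma U_minus_origin_nonempty: "U - {0} \<noteq> {}"
  using U_open U_nonempty not_open_singleton[of "0::'a"]
  by (metis Diff_eq_empty_iff subset_singleton_iff)

lemma christoffel_coeffs_constant:
  obtains a b where "\<And>p. p \<in> U - {0} \<Longrightarrow> christoffel_coeffs p = (a, b)"
proof -
  have "connected (U - {0})"
    using connected_open_delete[OF U_open U_connected] dim by simp
  obtain p0 where "p0 \<in> U - {0}"
    using U_minus_origin_nonempty by blast
  then have "christoffel_coeffs p = christoffel_coeffs p0" if "p \<in> U - {0}" for p
    using connected_local_const[OF \<open>connected (U - {0})\<close>] christoffel_coeffs_locally_constant that
    by blast
  then show thesis
    by (metis surj_pair that)
qed

lemma christoffel_coeffs_relation:
  assumes p: "p \<in> U - {0}" and ab: "\<And>q. q \<in> U - {0} \<Longrightarrow> christoffel_coeffs q = (a, b)"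
  shows "4 * b + a\<^sup>2 = 0"
proof -
  obtain w where pw: "\<Omega> p w = 1"
    using exists_dual p by blast
  have "ricci \<Gamma> p = ricci (invariant_christoffel a b) p"
  proof (rule ricci_transform_within_open)
    show "open (U - {0})"
      using U_open by (simp add: open_delete)
    show "\<Gamma> q = invariant_christoffel a b q" if "q \<in> U - {0}" for q
      using Christoffel_eq_coeffs ab that by blast
    show "(\<lambda>q. invariant_christoffel a b q y z) differentiable at p" for y z
      using invariant_christoffel_has_derivative by (rule differentiableI)
  qed (use p in simp)
  then have "4 * b + a\<^sup>2 = ricci \<Gamma> p w w"
    using ricci_invariant_christoffel[OF pw] by simp
  also have "\<dots> = 0"
    using ricci_skew[of p w w] p by simp
  finally show ?thesis .
qed

lemma Christoffel_explicit:
  obtains c where "\<And>p x y. p \<in> U \<Longrightarrow> \<Gamma> p x y =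
    (2 * c) *\<^sub>R (\<Omega> p x *\<^sub>R y + \<Omega> p y *\<^sub>R x) - (c\<^sup>2 * \<Omega> p x * \<Omega> p y) *\<^sub>R p"
proof -
  obtain a b where ab: "\<And>p. p \<in> U - {0} \<Longrightarrow> christoffel_coeffs p = (a, b)"
    using christoffel_coeffs_constant by blast
  obtain p0 where "p0 \<in> U - {0}"
    using U_minus_origin_nonempty by blast
  then have "4 * b + a\<^sup>2 = 0"
    using christoffel_coeffs_relation ab by blast
  then have b: "b = - (a / 2)\<^sup>2"
    by (simp add: power_divide)
  show thesis
  proof (rule that)
    fix p x y
    assume "p \<in> U"
    show "\<Gamma> p x y = (2 * (a / 2)) *\<^sub>R (\<Omega> p x *\<^sub>R y + \<Omega> p y *\<^sub>R x)
      - ((a / 2)\<^sup>2 * \<Omega> p x * \<Omega> p y) *\<^sub>R p"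
    proof (cases "p = 0")
      case True
      then show ?thesis
        using Christoffel_origin \<open>p \<in> U\<close> by simp
    next
      case False
      then show ?thesis
        using Christoffel_eq_coeffs[OF \<open>p \<in> U\<close> False ab] \<open>p \<in> U\<close> b
        by (simp add: invariant_christoffel_def)
    qed
  qed
qed

end

theorem lemma10p7:
  fixes \<Omega> :: "'a::euclidean_space \<Rightarrow> 'a \<Rightarrow> real"
    and U :: "'a set"
    and \<Gamma> :: "'a \<Rightarrow> 'a \<Rightarrow> 'a \<Rightarrow> 'a"
  assumes dim: "DIM('a) = 2"
    and \<Omega>_bilin: "bilinear \<Omega>"
    and \<Omega>_alt: "\<And>x. \<Omega> x x = 0"
    and \<Omega>_nz: "\<exists>x y. \<Omega> x y \<noteq> 0"
    and U_open: "open U" and U_conn: "connected U" and U_ne: "U \<noteq> {}"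
    and conn: "is_connection U \<Gamma>"
    and tf: "torsion_free U \<Gamma>"
    and ric_skew: "\<And>p y z. p \<in> U \<Longrightarrow> ricci \<Gamma> p y z = - ricci \<Gamma> p z y"
    and inv: "\<And>A. linear A \<Longrightarrow> lin_trace A = 0 \<Longrightarrow> lin_inf_affine U \<Gamma> A"
  shows "\<exists>c::real. \<forall>u v. smooth_on U u \<and> (\<exists>v0. v = (\<lambda>_. v0)) \<longrightarrow>
           (\<forall>p\<in>U. cov \<Gamma> u v p =
              (2 * c) *\<^sub>R (\<Omega> p (u p) *\<^sub>R v p + \<Omega> p (v p) *\<^sub>R u p)
              - (c\<^sup>2 * \<Omega> p (u p) * \<Omega> p (v p)) *\<^sub>R p)"
proof -
  interpret sl_invariant_connection \<Omega> U \<Gamma>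
    by unfold_locales (fact assms)+
  obtain c where \<Gamma>: "\<And>p x y. p \<in> U \<Longrightarrow> \<Gamma> p x y =
      (2 * c) *\<^sub>R (\<Omega> p x *\<^sub>R y + \<Omega> p y *\<^sub>R x) - (c\<^sup>2 * \<Omega> p x * \<Omega> p y) *\<^sub>R p"
    using Christoffel_explicit by blast
  show ?thesis
  proof (intro exI[of _ c] allI impI ballI)
    fix u v :: "'a \<Rightarrow> 'a" and p
    assume "smooth_on U u \<and> (\<exists>v0. v = (\<lambda>_. v0))" and "p \<in> U"
    then obtain v0 where "v = (\<lambda>_. v0)"
      by blast
    then show "cov \<Gamma> u v p = (2 * c) *\<^sub>R (\<Omega> p (u p) *\<^sub>R v p + \<Omega> p (v p) *\<^sub>R u p)
        - (c\<^sup>2 * \<Omega> p (u p) * \<Omega> p (v p)) *\<^sub>R p"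
      using \<Gamma>[OF \<open>p \<in> U\<close>] by (simp add: cov_def dd_def)
  qed
qed

end
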